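(* Let $q$ be a prime power, $\mathbb{L}=\mathrm{GF}(q^m)$, and $\ell\mid m$. Let $$\mathcal{C}_\ell=\{(b,b^q,\ldots,b^{q^{\ell-1}}) : b\in\mathrm{GF}(q^\ell)\}\subseteq\mathbb{L}^\ell.$$ In the symbol Hamming metric on $\mathbb{L}^\ell$, the covering radius of $\mathcal{C}_\ell$ is $\ell$ if $\ell<m$ and $\ell-1$ if $\ell=m$.
   Context: The symbol Hamming distance between $x,y\in\mathbb{L}^\ell$ is $|\{i : x_i\ne y_i\}|$. The covering radius of a code $\mathcal{C}\subseteq\mathbb{L}^\ell$ is $\max_{x\in\mathbb{L}^\ell}\min_{c\in\mathcal{C}}d(x,c)$. $\mathrm{GF}(q^\ell)$ is the unique subfield of $\mathbb{L}$ of size $q^\ell$. *)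

theory Defs
  imports "HOL-Computational_Algebra.Primes"
begin

text \<open>Vectors in L^n are represented as lists of length n.\<close>

definition hamming_dist :: "'a list \<Rightarrow> 'a list \<Rightarrow> nat" where
  "hamming_dist x y = card {i. i < length x \<and> x ! i \<noteq> y ! i}"

definition covering_radius :: "nat \<Rightarrow> ('a::finite) list set \<Rightarrow> nat" where
  "covering_radius n C =
     Max ((\<lambda>x. Min ((\<lambda>c. hamming_dist x c) ` C)) ` {x. length x = n})"

definition is_subfield :: "('a::field) set \<Rightarrow> bool" where
  "is_subfield S \<longleftrightarrow> 0 \<in> S \<and> 1 \<in> S \<and>
     (\<forall>x\<in>S. \<forall>y\<in>S. x + y \<in> S \<and> x - y \<in> S \<and> x * y \<in> S) \<and>
     (\<forall>x\<in>S. inverse x \<in> S)"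

definition GF_sub :: "nat \<Rightarrow> ('a::{field,finite}) set" where
  "GF_sub Q = (THE S. is_subfield S \<and> card S = Q)"

definition prime_power :: "nat \<Rightarrow> bool" where
  "prime_power q \<longleftrightarrow> (\<exists>p k. prime (p::nat) \<and> k > 0 \<and> q = p ^ k)"

definition trace_code :: "nat \<Rightarrow> nat \<Rightarrow> ('a::{field,finite}) list set" where
  "trace_code q l = {map (\<lambda>i. b ^ (q ^ i)) [0..<l] | b. b \<in> GF_sub (q ^ l)}"

end

theory Submission
  imports Defs "HOL-Computational_Algebra.Polynomial" "HOL-Number_Theory.Residues"
begin

text \<open>
  Inside \<open>\<bbbL> = GF(q^m)\<close> the subfield \<open>GF(q^l)\<close> is the set of fixed points of
  \<open>x \<mapsto> x^(q^l)\<close>, so every coordinate of a codeword lies in \<open>GF(q^l)\<close>.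
  If \<open>l < m\<close>, the constant word \<open>(a,\<dots>,a)\<close> with \<open>a \<notin> GF(q^l)\<close> differs from every
  codeword in all \<open>l\<close> places.
  If \<open>l = m\<close>, every word agrees with the codeword generated by its first entry in
  position 0. Conversely the proper subfields \<open>GF(q^k)\<close>, \<open>0 < k < m\<close>, together have
  fewer than \<open>q^m\<close> elements, so some \<open>a\<close> lies in none of them; then
  \<open>a = b^(q^i) = b^(q^j)\<close> with \<open>i < j\<close> would give \<open>a^(q^(j-i)) = a\<close>, hence
  \<open>(a,\<dots>,a)\<close> agrees with each codeword in at most one place.
\<close>

section \<open>Subfields of a finite field\<close>

lemma prime_CHAR_finite_field: "prime CHAR('a::{field,finite})"
  by (rule prime_CHAR_semidom) (simp add: finite_imp_CHAR_pos)

lemma CHAR_power_ge_two: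
  assumes "k > 0"
  shows "2 \<le> CHAR('a::{field,finite}) ^ k"
  using one_less_power[OF prime_gt_1_nat[OF prime_CHAR_finite_field[where ?'a = 'a]] assms]
  by simp

lemma CHAR_eq_if_card_eq_prime_power:
  assumes "prime p" and "card (UNIV :: 'a::{field,finite} set) = p ^ e"
  shows "CHAR('a) = p"
proof -
  have "CHAR('a) dvd p ^ e"
    using CHAR_dvd_CARD[where ?'a = 'a] assms(2) by simp
  then have "CHAR('a) dvd p"
    using prime_CHAR_finite_field prime_dvd_power by blast
  then show ?thesis
    using prime_CHAR_finite_field assms(1) primes_dvd_imp_eq by blast
qed

lemma subfield_power_card_minus_one:
  fixes S :: "'a::field set"
  assumes "is_subfield S" "finite S" "x \<in> S" "x \<noteq> 0"
  shows "x ^ (card S - 1) = 1"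
proof -
  have card_nonzero: "card (S - {0}) = card S - 1"
    using assms(1) by (simp add: is_subfield_def)
  have "(\<Prod>y\<in>S - {0}. x * y) = (\<Prod>y\<in>S - {0}. y)"
  proof (rule prod.reindex_bij_witness[of _ "\<lambda>y. y / x" "\<lambda>y. x * y"])
    fix y assume "y \<in> S - {0}"
    then show "y / x \<in> S - {0}"
      using assms by (auto simp: is_subfield_def divide_inverse)
  qed (use assms in \<open>auto simp: is_subfield_def\<close>)
  then have "x ^ (card S - 1) * (\<Prod>y\<in>S - {0}. y) = 1 * (\<Prod>y\<in>S - {0}. y)"
    by (simp add: prod.distrib card_nonzero)
  moreover have "(\<Prod>y\<in>S - {0}. y) \<noteq> 0"
    using assms(2) by simp
  ultimately show ?thesis
    by (rule mult_right_cancel[THEN iffD1, rotated])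
qed

lemma subfield_power_card:
  fixes S :: "'a::field set"
  assumes "is_subfield S" "finite S" "x \<in> S"
  shows "x ^ card S = x"
proof -
  have "card S > 0"
    using assms(1,2) by (auto simp: is_subfield_def card_gt_0_iff)
  then have "x ^ card S = x * x ^ (card S - 1)"
    by (metis Suc_diff_1 power_Suc)
  then show ?thesis
    using subfield_power_card_minus_one[OF assms] by (cases "x = 0") auto
qed

lemma is_subfield_UNIV: "is_subfield (UNIV :: 'a::field set)"
  by (simp add: is_subfield_def)

lemma is_subfield_fixed_points:
  assumes "Q > 0" and additive: "\<And>x y::'a::field. (x + y) ^ Q = x ^ Q + y ^ Q"
  shows "is_subfield {x::'a. x ^ Q = x}"
  unfolding is_subfield_def
proof (intro conjI ballI)
  fix x y :: 'a assume x: "x \<in> {x. x ^ Q = x}" and y: "y \<in> {x. x ^ Q = x}"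
  show "x + y \<in> {x. x ^ Q = x}"
    using x y additive by simp
  have "(x - y) ^ Q + y ^ Q = x ^ Q"
    using additive[of "x - y" y] by simp
  then show "x - y \<in> {x. x ^ Q = x}"
    using x y by (simp add: algebra_simps)
  show "x * y \<in> {x. x ^ Q = x}"
    using x y by (simp add: power_mult_distrib)
next
  fix x :: 'a assume "x \<in> {x. x ^ Q = x}"
  then show "inverse x \<in> {x. x ^ Q = x}"
    by (simp add: power_inverse)
qed (use assms(1) in auto)

lemma card_fixed_points_le:
  assumes "Q \<ge> 2"
  shows "card {x::'a::field. x ^ Q = x} \<le> Q"
proof -
  define f :: "'a poly" where "f = Polynomial.monom 1 Q - Polynomial.monom 1 1"
  have "degree f = Q"
    unfolding f_def using assms
    by (subst diff_conv_add_uminus, subst degree_add_eq_left) (auto simp: degree_monom_eq)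
  moreover have "f \<noteq> 0"
    using \<open>degree f = Q\<close> assms by auto
  moreover have "{x. poly f x = 0} = {x::'a. x ^ Q = x}"
    unfolding f_def by (auto simp: poly_monom)
  ultimately show ?thesis
    using card_poly_roots_bound[of f] by simp
qed

lemma card_geometric_sum_roots_le:
  assumes "d > 0" "k > 0"
  shows "card {x::'a::field. (\<Sum>j<k. (x ^ d) ^ j) = 0} \<le> d * (k - 1)"
proof -
  define h :: "'a poly" where "h = (\<Sum>j<k. Polynomial.monom 1 (d * j))"
  have poly_h: "poly h x = (\<Sum>j<k. (x ^ d) ^ j)" for x
    unfolding h_def by (simp add: poly_sum poly_monom power_mult)
  have "poly h 0 = 1"
    unfolding poly_h using assms by (simp add: sum.remove[of _ 0] power_0_left)
  then have "h \<noteq> 0" by auto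
  have "degree h \<le> d * (k - 1)"
    unfolding h_def by (rule degree_sum_le) (auto simp: degree_monom_eq)
  then show ?thesis
    using card_poly_roots_bound[OF \<open>h \<noteq> 0\<close>] by (simp add: poly_h)
qed

text \<open>
  With \<open>N = |\<bbbL>|\<close> and \<open>N - 1 = (Q - 1) k\<close>, an element with \<open>x^Q \<noteq> x\<close> has
  \<open>y = x^(Q-1) \<noteq> 1\<close> but \<open>y^k = x^(N-1) = 1\<close>, so it is a root of \<open>1 + y + \<dots> + y^(k-1)\<close>,
  which has at most \<open>N - Q\<close> roots.
\<close>
lemma card_fixed_points_ge:
  assumes "Q \<ge> 2" and "(Q - 1) dvd (card (UNIV :: 'a::{field,finite} set) - 1)"
  shows "Q \<le> card {x::'a. x ^ Q = x}"
proof -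
  define N where "N = card (UNIV :: 'a set)"
  obtain k where k: "N - 1 = (Q - 1) * k"
    using assms(2) unfolding N_def by blast
  have "card {0::'a, 1} \<le> N"
    unfolding N_def by (rule card_mono) auto
  then have "N \<ge> 2"
    by simp
  then have "k > 0"
    using k by (cases k) auto
  then have "Q - 1 \<le> (Q - 1) * k"
    by simp
  then have "Q \<le> N"
    using k \<open>N \<ge> 2\<close> assms(1) by linarith
  let ?R = "{x::'a. (\<Sum>j<k. (x ^ (Q - 1)) ^ j) = 0}"
  have "x \<in> ?R" if "x ^ Q \<noteq> x" for x
  proof -
    have "x \<noteq> 0" and "Q = Suc (Q - 1)"
      using that assms(1) by auto
    then have "x ^ (Q - 1) \<noteq> 1"
      using that by (metis mult.right_neutral power_Suc)
    have "(x ^ (Q - 1)) ^ k = x ^ (N - 1)"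
      by (simp only: k power_mult)
    also have "\<dots> = 1"
      unfolding N_def using subfield_power_card_minus_one[OF is_subfield_UNIV _ _ \<open>x \<noteq> 0\<close>] by simp
    finally have "(x ^ (Q - 1) - 1) * (\<Sum>j<k. (x ^ (Q - 1)) ^ j) = 0"
      by (simp flip: power_diff_1_eq)
    then show ?thesis
      using \<open>x ^ (Q - 1) \<noteq> 1\<close> by simp
  qed
  then have "N \<le> card ({x::'a. x ^ Q = x} \<union> ?R)"
    unfolding N_def by (intro card_mono) auto
  also have "\<dots> \<le> card {x::'a. x ^ Q = x} + card ?R"
    by (rule card_Un_le)
  also have "card ?R \<le> (Q - 1) * (k - 1)"
    using assms(1) \<open>k > 0\<close> by (intro card_geometric_sum_roots_le) auto
  also have "(Q - 1) * (k - 1) = N - Q"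
    using k \<open>Q \<le> N\<close> assms(1) by (simp add: diff_mult_distrib2)
  finally show ?thesis
    using \<open>Q \<le> N\<close> by linarith
qed

lemma GF_sub_eq_fixed_points:
  fixes Q :: nat
  assumes Q: "Q = CHAR('a::{field,finite}) ^ k" "k > 0"
    and dvd: "(Q - 1) dvd (card (UNIV :: 'a set) - 1)"
  shows "(GF_sub Q :: 'a set) = {x. x ^ Q = x}"
  unfolding GF_sub_def
proof (rule the_equality)
  have "Q \<ge> 2"
    unfolding Q(1) using Q(2) by (rule CHAR_power_ge_two)
  then have card_eq: "card {x::'a. x ^ Q = x} = Q"
    using card_fixed_points_le card_fixed_points_ge[OF _ dvd] le_antisym by blast
  have "is_subfield {x::'a. x ^ Q = x}"
    using \<open>Q \<ge> 2\<close> freshmans_dream'[OF prime_CHAR_finite_field Q(1)]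
    by (intro is_subfield_fixed_points) auto
  then show "is_subfield {x::'a. x ^ Q = x} \<and> card {x::'a. x ^ Q = x} = Q"
    using card_eq by simp
  fix S :: "'a set" assume S: "is_subfield S \<and> card S = Q"
  then have "S \<subseteq> {x. x ^ Q = x}"
    using subfield_power_card[of S] by auto
  then show "S = {x. x ^ Q = x}"
    using S card_eq by (intro card_subset_eq) auto
qed

lemma fixed_point_power:
  fixes b :: "'a::monoid_mult"
  assumes "b ^ Q = b"
  shows "(b ^ n) ^ Q = b ^ n"
  by (metis assms power_mult mult.commute)

lemma power_minus_one_dvd:
  fixes q :: nat
  assumes "l dvd m"
  shows "(q ^ l - 1) dvd (q ^ m - 1)"
proof (cases "q = 0")
  case False
  obtain j where j: "m = l * j"
    using assms by blast
  have "(int (q ^ l) - 1) dvd (int (q ^ l) ^ j - 1)"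
    by (simp add: power_diff_1_eq)
  moreover have "int (q ^ l) - 1 = int (q ^ l - 1)" and "int (q ^ l) ^ j - 1 = int (q ^ m - 1)"
    using False by (simp_all add: j power_mult of_nat_diff)
  ultimately show ?thesis
    by (simp only: of_nat_dvd_iff)
qed (use assms in \<open>cases "m = 0"; auto simp: power_0_left\<close>)

lemma sum_powers_less_power:
  assumes "(q::nat) \<ge> 2"
  shows "(\<Sum>k<m. q ^ k) < q ^ m"
proof (induction m)
  case (Suc m)
  have "q ^ m + q ^ m \<le> q ^ Suc m"
    using assms mult_le_mono1[of 2 q "q ^ m"] by (simp add: mult_2)
  then show ?case
    using Suc by simp
qed simp

lemma exists_not_in_proper_fixed_fields:
  assumes "card (UNIV :: 'a::{field,finite} set) = q ^ m" and "q \<ge> 2"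
  shows "\<exists>a::'a. \<forall>k\<in>{1..<m}. a ^ (q ^ k) \<noteq> a"
proof -
  define B where "B = (\<Union>k\<in>{1..<m}. {x::'a. x ^ (q ^ k) = x})"
  have "card B \<le> (\<Sum>k\<in>{1..<m}. card {x::'a. x ^ (q ^ k) = x})"
    unfolding B_def by (rule card_UN_le) simp
  also have "\<dots> \<le> (\<Sum>k\<in>{1..<m}. q ^ k)"
  proof (rule sum_mono, rule card_fixed_points_le)
    fix k :: nat assume "k \<in> {1..<m}"
    then show "2 \<le> q ^ k"
      using assms(2) power_increasing[of 1 k q] by simp
  qed
  also have "\<dots> \<le> (\<Sum>k<m. q ^ k)"
    by (rule sum_mono2) auto
  also have "\<dots> < card (UNIV :: 'a set)"
    using sum_powers_less_power[OF assms(2)] assms(1) by simp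
  finally have "B \<noteq> UNIV" by auto
  then show ?thesis
    unfolding B_def by blast
qed

lemma card_frobenius_orbit_hits_le_one:
  fixes a b :: "'a::monoid_mult"
  assumes a: "\<forall>k\<in>{1..<m}. a ^ (q ^ k) \<noteq> a"
  shows "card {i. i < m \<and> b ^ (q ^ i) = a} \<le> 1"
proof -
  have False if "i < j" "j < m" "b ^ (q ^ i) = a" "b ^ (q ^ j) = a" for i j
  proof -
    have "a ^ (q ^ (j - i)) = b ^ (q ^ i * q ^ (j - i))"
      using that(3) by (simp add: power_mult)
    also have "\<dots> = a"
      using that(1,4) by (simp flip: power_add)
    moreover have "j - i \<in> {1..<m}"
      using that(1,2) by auto
    ultimately show False
      using a by blast
  qed
  then show ?thesis
    by (auto simp: card_le_Suc0_iff_eq dest: linorder_neq_iff[THEN iffD1])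
qed

section \<open>Hamming distance and covering radius\<close>

lemma hamming_dist_le_length: "hamming_dist x c \<le> length x"
  unfolding hamming_dist_def
  by (rule order_trans[OF card_mono[of "{..<length x}"]]) auto

lemma hamming_dist_map_upt:
  assumes "length x = n"
  shows "hamming_dist x (map f [0..<n]) = card {i. i < n \<and> x ! i \<noteq> f i}"
  unfolding hamming_dist_def using assms by (intro arg_cong[where f = card]) auto

lemma covering_radius_eqI:
  fixes C :: "'a::finite list set"
  assumes "finite C" "C \<noteq> {}"
    and covered: "\<And>x. length x = n \<Longrightarrow> \<exists>c\<in>C. hamming_dist x c \<le> r"
    and far: "length w = n" "\<And>c. c \<in> C \<Longrightarrow> r \<le> hamming_dist w c"
  shows "covering_radius n C = r"
proof -
  define D where "D x = Min ((\<lambda>c. hamming_dist x c) ` C)" for x :: "'a list"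
  have D_le: "D x \<le> r" if "length x = n" for x
    using covered[OF that] assms(1) unfolding D_def by (auto intro: Min_le_iff[THEN iffD2])
  have "r \<le> D w"
    using far(2) assms(1,2) unfolding D_def by simp
  have "finite {x :: 'a list. length x = n}"
    using finite_lists_length_eq[of "UNIV :: 'a set" n] by simp
  then have "Max (D ` {x. length x = n}) = r"
    using D_le \<open>r \<le> D w\<close> far(1) by (intro antisym Max.boundedI) (auto intro: Max_ge_iff[THEN iffD2])
  then show ?thesis
    unfolding covering_radius_def D_def .
qed

section \<open>The covering radius of the trace code\<close>

lemma trace_code_eq_image:
  assumes "card (UNIV :: 'a::{field,finite} set) = q ^ m"
    and "q = CHAR('a) ^ e" "e > 0" "l dvd m" "l > 0"
  shows "(trace_code q l :: 'a list set) =
    (\<lambda>b. map (\<lambda>i. b ^ (q ^ i)) [0..<l]) ` {b. b ^ (q ^ l) = b}"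
proof -
  have "(q ^ l - 1) dvd (card (UNIV :: 'a set) - 1)"
    using power_minus_one_dvd[OF assms(4)] assms(1) by simp
  then have "(GF_sub (q ^ l) :: 'a set) = {b. b ^ (q ^ l) = b}"
    using assms(2,3,5) by (intro GF_sub_eq_fixed_points[where k = "e * l"])
      (auto simp: power_mult)
  then show ?thesis
    unfolding trace_code_def by auto
qed

lemma finite_trace_code: "finite (trace_code q l :: 'a::{field,finite} list set)"
  unfolding trace_code_def by simp

lemma covering_radius_trace_code_proper:
  assumes card: "card (UNIV :: 'a::{field,finite} set) = q ^ m"
    and q: "q = CHAR('a) ^ e" "e > 0" and "l dvd m" "l < m"
  shows "covering_radius l (trace_code q l :: 'a list set) = l"
proof -
  have "l > 0"
    using assms(4,5) by (auto intro: gr0I)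
  note code = trace_code_eq_image[OF card q \<open>l dvd m\<close> this]
  have "q \<ge> 2"
    unfolding q(1) using q(2) by (rule CHAR_power_ge_two)
  then have "2 \<le> q ^ l" and "q ^ l < q ^ m"
    using \<open>l > 0\<close> \<open>l < m\<close> power_increasing[of 1 l q] by (simp_all add: power_strict_increasing)
  then have "card {b::'a. b ^ (q ^ l) = b} < card (UNIV :: 'a set)"
    using card_fixed_points_le[OF \<open>2 \<le> q ^ l\<close>, where ?'a = 'a] card by simp
  then have "{b::'a. b ^ (q ^ l) = b} \<noteq> UNIV"
    by auto
  then obtain a :: 'a where a: "a ^ (q ^ l) \<noteq> a"
    by blast
  have one_codeword: "map (\<lambda>i. (1::'a) ^ (q ^ i)) [0..<l] \<in> trace_code q l"
    unfolding code by (intro image_eqI[where x = 1]) simp_all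
  show ?thesis
  proof (rule covering_radius_eqI[where w = "replicate l a"])
    show "l \<le> hamming_dist (replicate l a) c" if c: "c \<in> trace_code q l" for c
    proof -
      obtain b :: 'a where b: "b ^ (q ^ l) = b" "c = map (\<lambda>i. b ^ (q ^ i)) [0..<l]"
        using c unfolding code by blast
      have "{i. i < l \<and> replicate l a ! i \<noteq> b ^ (q ^ i)} = {..<l}"
        using fixed_point_power[OF b(1)] a by auto
      then show ?thesis
        unfolding b(2) by (simp add: hamming_dist_map_upt)
    qed
    show "\<exists>c\<in>trace_code q l. hamming_dist x c \<le> l" if "length x = l" for x :: "'a list"
      using one_codeword hamming_dist_le_length[of x] that by blast
  qed (use finite_trace_code one_codeword in auto)
qed

lemma covering_radius_trace_code_full:
  assumes card: "card (UNIV :: 'a::{field,finite} set) = q ^ m"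
    and q: "q = CHAR('a) ^ e" "e > 0" and "m > 0"
  shows "covering_radius m (trace_code q m :: 'a list set) = m - 1"
proof -
  have "b ^ (q ^ m) = b" for b :: 'a
    using subfield_power_card[OF is_subfield_UNIV, of b] card by simp
  then have code: "(trace_code q m :: 'a list set) = (\<lambda>b. map (\<lambda>i. b ^ (q ^ i)) [0..<m]) ` UNIV"
    using trace_code_eq_image[OF card q dvd_refl \<open>m > 0\<close>] by simp
  have "q \<ge> 2"
    unfolding q(1) using q(2) by (rule CHAR_power_ge_two)
  then obtain a :: 'a where a: "\<forall>k\<in>{1..<m}. a ^ (q ^ k) \<noteq> a"
    using exists_not_in_proper_fixed_fields[OF card] by blast
  show ?thesis
  proof (rule covering_radius_eqI[where w = "replicate m a"])
    show "\<exists>c\<in>trace_code q m. hamming_dist x c \<le> m - 1" if "length x = m" for x :: "'a list"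
    proof
      show "map (\<lambda>i. (x ! 0) ^ (q ^ i)) [0..<m] \<in> trace_code q m"
        unfolding code by blast
      have "card {i. i < m \<and> x ! i \<noteq> (x ! 0) ^ (q ^ i)} \<le> card ({..<m} - {0})"
        by (intro card_mono) auto
      then show "hamming_dist x (map (\<lambda>i. (x ! 0) ^ (q ^ i)) [0..<m]) \<le> m - 1"
        using that \<open>m > 0\<close> by (simp add: hamming_dist_map_upt)
    qed
    show "m - 1 \<le> hamming_dist (replicate m a) c" if c: "c \<in> trace_code q m" for c
    proof -
      obtain b :: 'a where c: "c = map (\<lambda>i. b ^ (q ^ i)) [0..<m]"
        using c unfolding code by blast
      let ?hits = "{i. i < m \<and> b ^ (q ^ i) = a}"
      have "{i. i < m \<and> replicate m a ! i \<noteq> b ^ (q ^ i)} = {..<m} - ?hits"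
        by auto
      then have "hamming_dist (replicate m a) c = m - card ?hits"
        unfolding c by (simp add: hamming_dist_map_upt) (subst card_Diff_subset; auto)
      then show ?thesis
        using card_frobenius_orbit_hits_le_one[OF a, of b] by simp
    qed
  qed (use finite_trace_code code in auto)
qed

theorem theorem10p2:
  fixes q m l :: nat
  assumes "prime_power q"
    and "m > 0"
    and "card (UNIV :: ('a::{field,finite}) set) = q ^ m"
    and "l dvd m"
  shows "covering_radius l (trace_code q l :: 'a list set) = (if l < m then l else l - 1)"
proof -
  obtain p e where p: "prime p" and "e > 0" and q: "q = p ^ e"
    using assms(1) unfolding prime_power_def by blast
  then have "CHAR('a) = p"
    using assms(3) by (intro CHAR_eq_if_card_eq_prime_power[where e = "e * m"]) (simp_all add: power_mult)
  then have q_CHAR: "q = CHAR('a) ^ e"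
    using q by simp
  show ?thesis
  proof (cases "l < m")
    case True
    then show ?thesis
      using covering_radius_trace_code_proper[OF assms(3) q_CHAR \<open>e > 0\<close> assms(4)] by simp
  next
    case False
    then have "l = m"
      using dvd_imp_le[OF assms(4,2)] by simp
    then show ?thesis
      using covering_radius_trace_code_full[OF assms(3) q_CHAR \<open>e > 0\<close> assms(2)] by simp
  qed
qed

end
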